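(* For strategies with finite input sets $A,B$ and finite output sets $X,Y$, the class $\mathbb{NOSIG}:=\mathbf{R}\text{-}\mathbb{SIG}\cap\mathbf{L}\text{-}\mathbb{SIG}$ coincides exactly with the set of no-signalling strategies, i.e. those $P(x,y\mid a,b)$ such that $\sum_{y}P(x,y\mid a,b)$ does not depend on $b$ (for every $a,x$) and $\sum_{x}P(x,y\mid a,b)$ does not depend on $a$ (for every $b,y$).
   Context: A (two-party, single-round) strategy with input sets $A,B$ and output sets $X,Y$ is a family of conditional distributions $P(x,y\mid a,b)$. Distance: $|U,U'|=\sum_{a,b,x,y}|P_U(x,y\mid a,b)-P_{U'}(x,y\mid a,b)|$, and for a set $\mathcal U'$ of strategies $|U,\mathcal U'|=\inf_{U'\in\mathcal U'}|U,U'|$. For a strategy $U$ with input sets $A_U,B_U$ and output sets $X_U,Y_U$, $\mathrm{LOC}^n(U)$ is the set of strategies Alice and Bob can realize as follows: pick a finite set $R$ and a uniformly random $r\in R$ shared by both; Alice uses functions $f_A^j:A\times X_U^{j}\times R\to A_U$ ($0\le j<n$) to choose her input to the $(j+1)$-th call of $U$ from her input and previous outputs, and $f_A^n:A\times X_U^n\times R\to X$ to produce her output; Bob likewise with $g_B^j:B\times Y_U^j\times R\to B_U$ and $g_B^n:B\times Y_U^n\times R\to Y$; each of the (up to $n$) calls of $U$ is an independent use of $U$. $U'\le_{LOC}U$ iff $\lim_{n\to\infty}|U',\mathrm{LOC}^n(U)|=0$. The $\mathbf{R}\text{-}\mathbf{SIG}$ box: on inputs $a\in A$ (Alice), $b$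 (Bob), outputs $a$ to Alice and $a$ to Bob. The $\mathbf{L}\text{-}\mathbf{SIG}$ box: on inputs $a$, $b\in B$, outputs $b$ to Alice and $b$ to Bob. $\mathbf{R}\text{-}\mathbb{SIG}=\{U:U\le_{LOC}\mathbf{R}\text{-}\mathbf{SIG}\}$, $\mathbf{L}\text{-}\mathbb{SIG}=\{U:U\le_{LOC}\mathbf{L}\text{-}\mathbf{SIG}\}$. *)

theory Defs
  imports Complex_Main
begin

text \<open>A (two-party, single-round) strategy with input sets 'a, 'b and output sets 'x, 'y
  (finite types): P a b x y = P(x,y | a,b).\<close>
type_synonym ('a,'b,'x,'y) strat = "'a \<Rightarrow> 'b \<Rightarrow> 'x \<Rightarrow> 'y \<Rightarrow> real"

definition is_strategy :: "('a::finite,'b::finite,'x::finite,'y::finite) strat \<Rightarrow> bool" where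
  "is_strategy P \<longleftrightarrow> (\<forall>a b x y. 0 \<le> P a b x y) \<and> (\<forall>a b. (\<Sum>x\<in>UNIV. \<Sum>y\<in>UNIV. P a b x y) = 1)"

definition strat_dist :: "('a::finite,'b::finite,'x::finite,'y::finite) strat \<Rightarrow> ('a,'b,'x,'y) strat \<Rightarrow> real" where
  "strat_dist U U' = (\<Sum>a\<in>UNIV. \<Sum>b\<in>UNIV. \<Sum>x\<in>UNIV. \<Sum>y\<in>UNIV. \<bar>U a b x y - U' a b x y\<bar>)"

definition strat_setdist :: "('a::finite,'b::finite,'x::finite,'y::finite) strat \<Rightarrow> ('a,'b,'x,'y) strat set \<Rightarrow> real" where
  "strat_setdist U S = (INF U'\<in>S. strat_dist U U')"

text \<open>The strategy realised with n sequential independent calls of the box U, shared uniform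
  randomness r \<in> R (R a finite nonempty set), Alice's input functions fA j (history = list of her
  previous j box outputs), her output function fO, and Bob's gB j, gO likewise.\<close>
definition realize ::
  "nat \<Rightarrow> ('au::finite,'bu::finite,'xu::finite,'yu::finite) strat \<Rightarrow> nat set
   \<Rightarrow> (nat \<Rightarrow> 'a \<Rightarrow> 'xu list \<Rightarrow> nat \<Rightarrow> 'au) \<Rightarrow> ('a \<Rightarrow> 'xu list \<Rightarrow> nat \<Rightarrow> 'x)
   \<Rightarrow> (nat \<Rightarrow> 'b \<Rightarrow> 'yu list \<Rightarrow> nat \<Rightarrow> 'bu) \<Rightarrow> ('b \<Rightarrow> 'yu list \<Rightarrow> nat \<Rightarrow> 'y)
   \<Rightarrow> ('a,'b,'x,'y) strat" where
  "realize n U R fA fO gB gO = (\<lambda>a b x y.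
     (1 / real (card R)) * (\<Sum>r\<in>R. \<Sum>xs\<in>{xs. length xs = n}. \<Sum>ys\<in>{ys. length ys = n}.
        (if fO a xs r = x \<and> gO b ys r = y then
           (\<Prod>j<n. U (fA j a (take j xs) r) (gB j b (take j ys) r) (xs ! j) (ys ! j))
         else 0)))"

definition LOC :: "nat \<Rightarrow> ('au::finite,'bu::finite,'xu::finite,'yu::finite) strat
                   \<Rightarrow> ('a,'b,'x,'y) strat set" where
  "LOC n U = {realize n U R fA fO gB gO | R fA fO gB gO. finite R \<and> R \<noteq> {}}"

definition le_LOC :: "('a::finite,'b::finite,'x::finite,'y::finite) strat
                      \<Rightarrow> ('au::finite,'bu::finite,'xu::finite,'yu::finite) strat \<Rightarrow> bool" where
  "le_LOC U' U \<longleftrightarrow> (\<lambda>n. strat_setdist U' (LOC n U)) \<longlonglongrightarrow> 0"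

definition R_SIG_box :: "('a,'b,'a,'a) strat" where
  "R_SIG_box = (\<lambda>a b x y. if x = a \<and> y = a then 1 else 0)"

definition L_SIG_box :: "('a,'b,'b,'b) strat" where
  "L_SIG_box = (\<lambda>a b x y. if x = b \<and> y = b then 1 else 0)"

definition R_SIG_class :: "('a::finite,'b::finite,'x::finite,'y::finite) strat set" where
  "R_SIG_class = {U. is_strategy U \<and> le_LOC U (R_SIG_box :: ('a,'b,'a,'a) strat)}"

definition L_SIG_class :: "('a::finite,'b::finite,'x::finite,'y::finite) strat set" where
  "L_SIG_class = {U. is_strategy U \<and> le_LOC U (L_SIG_box :: ('a,'b,'b,'b) strat)}"

definition no_signalling :: "('a::finite,'b::finite,'x::finite,'y::finite) strat set" where
  "no_signalling = {P. is_strategy P \<and>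
     (\<forall>a x b b'. (\<Sum>y\<in>UNIV. P a b x y) = (\<Sum>y\<in>UNIV. P a b' x y)) \<and>
     (\<forall>b y a a'. (\<Sum>x\<in>UNIV. P a b x y) = (\<Sum>x\<in>UNIV. P a' b x y))}"

end

theory Submission
  imports Defs "HOL-Library.Cardinality" "HOL-Library.Nat_Bijection"
begin

text \<open>
  A box that ignores Bob's input, such as R-SIG, lets no realization built from it carry Bob's
  input into Alice's marginal, and this linear constraint survives the limit in the
  \<open>\<ell>\<^sub>1\<close> distance. Conversely, if Alice's marginal \<open>P\<^sub>A(x|a)\<close> does not depend on \<open>b\<close>,
  then \<open>P(x,y|a,b) = P\<^sub>A(x|a) Q(y|a,b,x)\<close>. One call of R-SIG tells Bob \<open>a\<close>; two shared uniform
  indices below \<open>N\<close> then let Alice output \<open>x\<close> with the empirical distribution of a rounding of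
  \<open>P\<^sub>A(\<cdot>|a)\<close> to multiples of \<open>1/N\<close>, and Bob, who can recompute \<open>x\<close>, output \<open>y\<close> from
  a rounding of \<open>Q(\<cdot>|a,b,x)\<close>. The error is \<open>O(1/N)\<close>. L-SIG is R-SIG with the parties swapped.
\<close>

definition empirical :: "nat \<Rightarrow> (nat \<Rightarrow> 'w) \<Rightarrow> 'w \<Rightarrow> real" where
  "empirical N f w = real (card {r\<in>{..<N}. f r = w}) / real N"

lemma empirical_eq_sum: "empirical N f w = (\<Sum>r<N. if f r = w then 1 else 0) / real N"
  unfolding empirical_def by (simp add: sum.inter_filter[symmetric])

lemma empirical_nonneg: "0 \<le> empirical N f w"
  unfolding empirical_def by simp

lemma empirical_le_1: "empirical N f w \<le> 1"
proof -
  have "card {r\<in>{..<N}. f r = w} \<le> N"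
    using card_mono[of "{..<N}" "{r\<in>{..<N}. f r = w}"] by auto
  then show ?thesis unfolding empirical_def by (cases "N = 0") (simp_all add: divide_le_eq_1)
qed

lemma exists_fun_with_fiber_cards:
  fixes k :: "'w \<Rightarrow> nat"
  assumes "finite W"
  shows "\<exists>f::nat \<Rightarrow> 'w. (\<forall>r < sum k W. f r \<in> W) \<and> (\<forall>w\<in>W. card {r\<in>{..<sum k W}. f r = w} = k w)"
  using assms
proof (induction W rule: finite_induct)
  case empty
  then show ?case by simp
next
  case (insert w W)
  define M where "M = sum k W"
  obtain f where f_range: "\<forall>r<M. f r \<in> W" and f_card: "\<forall>v\<in>W. card {r\<in>{..<M}. f r = v} = k v"
    using insert.IH unfolding M_def by blast
  define g where "g r = (if r < M then f r else w)" for r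
  have sum_insert: "sum k (insert w W) = M + k w"
    using insert.hyps M_def by simp
  have "card {r\<in>{..<M + k w}. g r = v} = k v" if "v \<in> insert w W" for v
  proof (cases "v = w")
    case True
    have "{r\<in>{..<M + k w}. g r = v} = {M..<M + k w}"
      using True f_range insert.hyps(2) by (auto simp: g_def) (metis not_less)
    then show ?thesis using True by simp
  next
    case False
    then have "{r\<in>{..<M + k w}. g r = v} = {r\<in>{..<M}. f r = v}"
      by (auto simp: g_def)
    then show ?thesis using f_card False that by simp
  qed
  moreover have "\<forall>r < M + k w. g r \<in> insert w W"
    using f_range by (simp add: g_def)
  ultimately show ?case unfolding sum_insert by blast
qed

lemma sum_abs_le_if_sum_eq_0:
  fixes d :: "'w::finite \<Rightarrow> real"
  assumes "0 \<le> c" and d_sum: "sum d UNIV = 0"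
    and d_bounds: "\<And>w. w \<noteq> w0 \<Longrightarrow> 0 \<le> d w \<and> d w \<le> c"
  shows "(\<Sum>w\<in>UNIV. \<bar>d w\<bar>) \<le> 2 * real CARD('w) * c"
proof -
  have "d w0 = - (\<Sum>w\<in>UNIV-{w0}. d w)"
    using d_sum sum.remove[of UNIV w0 d] by simp
  moreover have "(\<Sum>w\<in>UNIV-{w0}. \<bar>d w\<bar>) = (\<Sum>w\<in>UNIV-{w0}. d w)"
    using d_bounds by (intro sum.cong) auto
  moreover have "(\<Sum>w\<in>UNIV-{w0}. d w) \<ge> 0"
    using d_bounds by (intro sum_nonneg) auto
  ultimately have "(\<Sum>w\<in>UNIV. \<bar>d w\<bar>) = 2 * (\<Sum>w\<in>UNIV-{w0}. d w)"
    using sum.remove[of UNIV w0 "\<lambda>w. \<bar>d w\<bar>"] by simp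
  also have "(\<Sum>w\<in>UNIV-{w0}. d w) \<le> real (card (UNIV - {w0})) * c"
    using d_bounds sum_bounded_above[of "UNIV - {w0}" d c] by auto
  also have "\<dots> \<le> real CARD('w) * c"
    using \<open>0 \<le> c\<close> by (intro mult_right_mono) (auto intro: card_mono)
  finally show ?thesis by simp
qed

lemma exists_rounding:
  fixes p :: "'w::finite \<Rightarrow> real"
  assumes p_nonneg: "\<And>w. 0 \<le> p w" and p_sum: "(\<Sum>w\<in>UNIV. p w) = 1" and "N > 0"
  shows "\<exists>k::'w \<Rightarrow> nat. sum k UNIV = N \<and>
           (\<Sum>w\<in>UNIV. \<bar>p w - real (k w) / real N\<bar>) \<le> 2 * real CARD('w) / real N"
proof -
  define w0 :: 'w where "w0 = undefined"
  define k0 where "k0 w = nat \<lfloor>real N * p w\<rfloor>" for w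
  have k0_floor: "real (k0 w) = real_of_int \<lfloor>real N * p w\<rfloor>" for w
    using p_nonneg unfolding k0_def by simp
  define S where "S = (\<Sum>w\<in>UNIV-{w0}. k0 w)"
  have "real S \<le> (\<Sum>w\<in>UNIV-{w0}. real N * p w)"
    unfolding S_def of_nat_sum k0_floor by (intro sum_mono) simp
  also have "\<dots> \<le> (\<Sum>w\<in>UNIV. real N * p w)"
    using p_nonneg by (intro sum_mono2) auto
  also have "\<dots> = real N"
    using p_sum by (simp add: sum_distrib_left[symmetric])
  finally have "S \<le> N" by simp
  define k where "k w = (if w = w0 then N - S else k0 w)" for w
  have "sum k UNIV = k w0 + sum k (UNIV - {w0})"
    by (simp add: sum.remove)
  also have "sum k (UNIV - {w0}) = S"
    unfolding S_def k_def by (intro sum.cong) auto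
  finally have k_sum: "sum k UNIV = N"
    using \<open>S \<le> N\<close> by (simp add: k_def)
  define d where "d w = p w - real (k w) / real N" for w
  have d_sum: "sum d UNIV = 0"
    using p_sum k_sum \<open>N > 0\<close> unfolding d_def
    by (simp add: sum_subtractf sum_divide_distrib[symmetric] of_nat_sum[symmetric])
  have d_bounds: "0 \<le> d w \<and> d w \<le> 1 / real N" if "w \<noteq> w0" for w
  proof -
    have "real (k w) \<le> real N * p w" "real N * p w \<le> real (k w) + 1"
      using that k0_floor[of w] by (simp_all add: k_def)
    moreover have "d w = (real N * p w - real (k w)) / real N"
      using \<open>N > 0\<close> unfolding d_def by (simp add: field_simps)
    ultimately show ?thesis
      by (simp add: divide_right_mono)
  qed
  have "(\<Sum>w\<in>UNIV. \<bar>d w\<bar>) \<le> 2 * real CARD('w) * (1 / real N)"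
    using d_sum d_bounds by (intro sum_abs_le_if_sum_eq_0) simp_all
  then show ?thesis
    using k_sum unfolding d_def by auto
qed

lemma exists_empirical_approx:
  fixes p :: "'w::finite \<Rightarrow> real"
  assumes "\<And>w. 0 \<le> p w" and "(\<Sum>w\<in>UNIV. p w) = 1" and "N > 0"
  shows "\<exists>f. (\<Sum>w\<in>UNIV. \<bar>p w - empirical N f w\<bar>) \<le> 2 * real CARD('w) / real N"
proof -
  obtain k where k_sum: "sum k UNIV = N"
    and k_approx: "(\<Sum>w\<in>UNIV. \<bar>p w - real (k w) / real N\<bar>) \<le> 2 * real CARD('w) / real N"
    using exists_rounding assms by blast
  obtain f where "\<forall>w. card {r\<in>{..<sum k UNIV}. f r = w} = k w"
    using exists_fun_with_fiber_cards[of UNIV k] by auto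
  then have "empirical N f w = real (k w) / real N" for w
    unfolding empirical_def k_sum by simp
  then show ?thesis
    using k_approx by (intro exI[of _ f]) simp
qed

lemma sum_abs_diff_mult_le:
  fixes p p' :: "'x::finite \<Rightarrow> real" and q q' :: "'x \<Rightarrow> 'y::finite \<Rightarrow> real"
  assumes q_nonneg: "\<And>x y. 0 \<le> q x y" and q_sum: "\<And>x. (\<Sum>y\<in>UNIV. q x y) = 1"
    and p'_nonneg: "\<And>x. 0 \<le> p' x" and p'_le_1: "\<And>x. p' x \<le> 1"
    and q'_close: "\<And>x. (\<Sum>y\<in>UNIV. \<bar>q x y - q' x y\<bar>) \<le> e"
  shows "(\<Sum>x\<in>UNIV. \<Sum>y\<in>UNIV. \<bar>p x * q x y - p' x * q' x y\<bar>)
           \<le> (\<Sum>x\<in>UNIV. \<bar>p x - p' x\<bar>) + real CARD('x) * e"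
proof -
  have "(\<Sum>y\<in>UNIV. \<bar>p x * q x y - p' x * q' x y\<bar>) \<le> \<bar>p x - p' x\<bar> + e" for x
  proof -
    have "\<bar>p x * q x y - p' x * q' x y\<bar> \<le> \<bar>p x - p' x\<bar> * q x y + p' x * \<bar>q x y - q' x y\<bar>" for y
    proof -
      have "p x * q x y - p' x * q' x y = (p x - p' x) * q x y + p' x * (q x y - q' x y)"
        by (simp add: algebra_simps)
      then show ?thesis
        using q_nonneg p'_nonneg
        by (metis abs_mult abs_of_nonneg abs_triangle_ineq)
    qed
    then have "(\<Sum>y\<in>UNIV. \<bar>p x * q x y - p' x * q' x y\<bar>)
        \<le> \<bar>p x - p' x\<bar> * (\<Sum>y\<in>UNIV. q x y) + p' x * (\<Sum>y\<in>UNIV. \<bar>q x y - q' x y\<bar>)"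
      by (simp add: sum_distrib_left sum.distrib[symmetric] sum_mono)
    also have "\<dots> \<le> \<bar>p x - p' x\<bar> + 1 * e"
      using q'_close[of x] p'_nonneg[of x] p'_le_1[of x] sum_abs_ge_zero
      by (intro add_mono mult_mono) (auto simp: q_sum)
    finally show ?thesis by simp
  qed
  then have "(\<Sum>x\<in>UNIV. \<Sum>y\<in>UNIV. \<bar>p x * q x y - p' x * q' x y\<bar>) \<le> (\<Sum>x\<in>UNIV. \<bar>p x - p' x\<bar> + e)"
    by (rule sum_mono)
  then show ?thesis
    by (simp add: sum.distrib)
qed

lemma exists_conditional_distribution:
  fixes P :: "'i \<Rightarrow> 'y::finite \<Rightarrow> real"
  assumes P_nonneg: "\<And>i y. 0 \<le> P i y"
  shows "\<exists>Q. (\<forall>i y. 0 \<le> Q i y) \<and> (\<forall>i. (\<Sum>y\<in>UNIV. Q i y) = 1)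
             \<and> (\<forall>i y. P i y = (\<Sum>y'\<in>UNIV. P i y') * Q i y)"
proof -
  define M where "M i = (\<Sum>y\<in>UNIV. P i y)" for i
  define Q where "Q i y = (if M i = 0 then (if y = undefined then 1 else 0) else P i y / M i)" for i y
  have M_nonneg: "M i \<ge> 0" for i
    unfolding M_def by (simp add: P_nonneg sum_nonneg)
  have P_zero: "P i y = 0" if "M i = 0" for i y
    using that P_nonneg unfolding M_def by (simp add: sum_nonneg_eq_0_iff)
  have "(\<Sum>y\<in>UNIV. Q i y) = 1" for i
    by (cases "M i = 0") (simp_all add: Q_def sum_divide_distrib[symmetric] M_def[symmetric])
  moreover have "P i y = M i * Q i y" for i y
    by (cases "M i = 0") (simp_all add: Q_def P_zero)
  moreover have "0 \<le> Q i y" for i y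
    by (simp add: Q_def P_nonneg M_nonneg)
  ultimately show ?thesis
    unfolding M_def by blast
qed

lemma strat_dist_nonneg: "0 \<le> strat_dist U V"
  unfolding strat_dist_def by (intro sum_nonneg) auto

lemma LOC_nonempty: "LOC n U \<noteq> {}"
  unfolding LOC_def by blast

lemma strat_setdist_LOC_le: "V \<in> LOC n U \<Longrightarrow> strat_setdist U' (LOC n U) \<le> strat_dist U' V"
  unfolding strat_setdist_def
  by (rule cINF_lower) (auto intro!: bdd_belowI[of _ 0] strat_dist_nonneg)

lemma strat_setdist_LOC_nonneg: "0 \<le> strat_setdist U' (LOC n U)"
  unfolding strat_setdist_def
  by (rule cINF_greatest) (auto simp: LOC_nonempty strat_dist_nonneg)

lemma le_LOC_if_approximable:
  assumes "\<And>n. n > 0 \<Longrightarrow> \<exists>V\<in>LOC n U. strat_dist U' V \<le> C / real n"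
  shows "le_LOC U' U"
  unfolding le_LOC_def
proof (rule tendsto_sandwich[where f = "\<lambda>_. 0" and h = "\<lambda>n. C / real n"])
  have "strat_setdist U' (LOC n U) \<le> C / real n" if "n > 0" for n
    using assms[OF that] strat_setdist_LOC_le by (meson order_trans)
  then show "\<forall>\<^sub>F n in sequentially. strat_setdist U' (LOC n U) \<le> C / real n"
    by (intro eventually_sequentiallyI[of 1]) auto
qed (auto simp: strat_setdist_LOC_nonneg lim_const_over_n)

lemma sum_abs_marginal_le_strat_dist:
  "(\<Sum>y\<in>UNIV. \<bar>U a b x y - V a b x y\<bar>) \<le> strat_dist U V"
proof -
  have "(\<Sum>y\<in>UNIV. \<bar>U a b x y - V a b x y\<bar>) \<le> (\<Sum>x\<in>UNIV. \<Sum>y\<in>UNIV. \<bar>U a b x y - V a b x y\<bar>)"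
    by (rule member_le_sum) (auto intro: sum_nonneg)
  also have "\<dots> \<le> (\<Sum>b\<in>UNIV. \<Sum>x\<in>UNIV. \<Sum>y\<in>UNIV. \<bar>U a b x y - V a b x y\<bar>)"
    by (rule member_le_sum[where f = "\<lambda>b. \<Sum>x\<in>UNIV. \<Sum>y\<in>UNIV. \<bar>U a b x y - V a b x y\<bar>"])
       (auto intro: sum_nonneg)
  also have "\<dots> \<le> strat_dist U V"
    unfolding strat_dist_def
    by (rule member_le_sum[where f = "\<lambda>a. \<Sum>b\<in>UNIV. \<Sum>x\<in>UNIV. \<Sum>y\<in>UNIV. \<bar>U a b x y - V a b x y\<bar>"])
       (auto intro: sum_nonneg)
  finally show ?thesis .
qed

definition no_signal_to_alice :: "('a::finite,'b::finite,'x::finite,'y::finite) strat \<Rightarrow> bool" where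
  "no_signal_to_alice P \<longleftrightarrow> (\<forall>a x b b'. (\<Sum>y\<in>UNIV. P a b x y) = (\<Sum>y\<in>UNIV. P a b' x y))"

lemma no_signal_to_alice_if_le_LOC:
  fixes P :: "('a::finite,'b::finite,'x::finite,'y::finite) strat"
    and U :: "('au::finite,'bu::finite,'xu::finite,'yu::finite) strat"
  assumes "le_LOC P U" and LOC_no_signal: "\<And>n (V :: ('a,'b,'x,'y) strat). V \<in> LOC n U \<Longrightarrow> no_signal_to_alice V"
  shows "no_signal_to_alice P"
  unfolding no_signal_to_alice_def
proof (intro allI)
  fix a x b b'
  define D where "D = \<bar>(\<Sum>y\<in>UNIV. P a b x y) - (\<Sum>y\<in>UNIV. P a b' x y)\<bar>"
  have "D / 2 \<le> strat_setdist P (LOC n U)" for n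
    unfolding strat_setdist_def
  proof (rule cINF_greatest[OF LOC_nonempty])
    fix V :: "('a,'b,'x,'y) strat" assume "V \<in> LOC n U"
    then have "(\<Sum>y\<in>UNIV. V a b x y) = (\<Sum>y\<in>UNIV. V a b' x y)"
      using LOC_no_signal unfolding no_signal_to_alice_def by blast
    then have "D = \<bar>(\<Sum>y\<in>UNIV. P a b x y - V a b x y) - (\<Sum>y\<in>UNIV. P a b' x y - V a b' x y)\<bar>"
      unfolding D_def by (simp add: sum_subtractf)
    also have "\<dots> \<le> (\<Sum>y\<in>UNIV. \<bar>P a b x y - V a b x y\<bar>) + (\<Sum>y\<in>UNIV. \<bar>P a b' x y - V a b' x y\<bar>)"
      by (rule order_trans[OF abs_triangle_ineq4 add_mono[OF sum_abs sum_abs]])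
    also have "\<dots> \<le> 2 * strat_dist P V"
      using sum_abs_marginal_le_strat_dist[of P a b x V] sum_abs_marginal_le_strat_dist[of P a b' x V]
      by simp
    finally show "D / 2 \<le> strat_dist P V" by simp
  qed
  then have "D / 2 \<le> 0"
    using \<open>le_LOC P U\<close> unfolding le_LOC_def by (intro LIMSEQ_le_const) auto
  then show "(\<Sum>y\<in>UNIV. P a b x y) = (\<Sum>y\<in>UNIV. P a b' x y)"
    unfolding D_def by simp
qed

lemma sum_if_conj_eq:
  "(\<Sum>y\<in>(UNIV :: 'y::finite set). if P \<and> c = y then t else 0) = (if P then t else (0 :: 'r :: comm_monoid_add))"
  by (cases P) (auto simp: sum.delta')

lemma sum_realize_over_bob_outputs:
  fixes gO :: "'b \<Rightarrow> 'yu::finite list \<Rightarrow> nat \<Rightarrow> 'y::finite"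
  shows "(\<Sum>y\<in>UNIV. realize n U R fA fO gB gO a b x y) =
     (1 / real (card R)) * (\<Sum>r\<in>R. \<Sum>xs\<in>{xs. length xs = n}. \<Sum>ys\<in>{ys. length ys = n}.
        if fO a xs r = x then (\<Prod>j<n. U (fA j a (take j xs) r) (gB j b (take j ys) r) (xs ! j) (ys ! j))
        else 0)"
  unfolding realize_def sum_distrib_left[symmetric]
  by (simp add: sum.swap[of _ _ UNIV] sum_if_conj_eq)

lemma no_signal_to_alice_realize:
  fixes U :: "('au::finite,'bu::finite,'xu::finite,'yu::finite) strat"
  assumes "\<And>a b b'. U a b = U a b'"
  shows "no_signal_to_alice (realize n U R fA fO gB gO)"
  unfolding no_signal_to_alice_def
proof (intro allI)
  fix a x b b'
  have "(\<Prod>j<n. U (A j) (gB j b (take j ys) r) (xs ! j) (ys ! j))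
      = (\<Prod>j<n. U (A j) (gB j b' (take j ys) r) (xs ! j) (ys ! j))"
    for A r and xs :: "'xu list" and ys :: "'yu list"
    using assms by (intro prod.cong refl) metis
  then show "(\<Sum>y\<in>UNIV. realize n U R fA fO gB gO a b x y) = (\<Sum>y\<in>UNIV. realize n U R fA fO gB gO a b' x y)"
    unfolding sum_realize_over_bob_outputs by (simp only:)
qed

lemma prod_R_SIG_box:
  assumes "length xs = n" and "length ys = n"
  shows "(\<Prod>j<n. (R_SIG_box :: ('a,'b,'a,'a) strat) a b (xs ! j) (ys ! j))
           = (if xs = replicate n a \<and> ys = replicate n a then 1 else 0)"
proof (cases "xs = replicate n a \<and> ys = replicate n a")
  case False
  then obtain j where "j < n" and "\<not> (xs ! j = a \<and> ys ! j = a)"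
    using assms by (auto simp: list_eq_iff_nth_eq)
  then show ?thesis
    using False by (intro trans[OF prod_zero]) (auto simp: R_SIG_box_def)
qed (simp add: R_SIG_box_def)

lemma sum_sum_delta:
  assumes "finite A" "finite B" "u \<in> A" "v \<in> B"
  shows "(\<Sum>x\<in>A. \<Sum>y\<in>B. if x = u \<and> y = v then f x y else 0) = (f u v :: 'c :: comm_monoid_add)"
proof -
  have "(\<Sum>y\<in>B. if x = u \<and> y = v then f x y else 0) = (if x = u then f x v else 0)" for x
    using assms by (cases "x = u") (simp_all add: sum.delta')
  then show ?thesis
    using assms by (simp add: sum.delta')
qed

lemma realize_R_SIG_box_forwarding:
  "realize n (R_SIG_box :: ('a::finite,'b::finite,'a,'a) strat) R (\<lambda>j a h r. a) fO (\<lambda>j b h r. b) gO a b x y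
     = (\<Sum>r\<in>R. if fO a (replicate n a) r = x \<and> gO b (replicate n a) r = y then 1 else 0) / real (card R)"
proof -
  let ?L = "{xs :: 'a list. length xs = n}"
  have "(\<Sum>xs\<in>?L. \<Sum>ys\<in>?L. if fO a xs r = x \<and> gO b ys r = y
            then \<Prod>j<n. (R_SIG_box :: ('a,'b,'a,'a) strat) a b (xs ! j) (ys ! j) else 0)
        = (\<Sum>xs\<in>?L. \<Sum>ys\<in>?L. if xs = replicate n a \<and> ys = replicate n a
            then (if fO a xs r = x \<and> gO b ys r = y then 1 else 0) else 0)" for r
    by (intro sum.cong refl) (simp only: mem_Collect_eq prod_R_SIG_box; auto)
  also have "\<dots> r = (if fO a (replicate n a) r = x \<and> gO b (replicate n a) r = y then 1 else 0)" for r
    by (rule sum_sum_delta) (use finite_lists_length_eq[of "UNIV :: 'a set" n] in simp_all)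
  finally show ?thesis
    unfolding realize_def by simp
qed

lemma empirical_product_in_LOC_R_SIG_box:
  fixes F :: "'a::finite \<Rightarrow> nat \<Rightarrow> 'x::finite" and G :: "'a \<Rightarrow> 'b::finite \<Rightarrow> 'x \<Rightarrow> nat \<Rightarrow> 'y::finite"
  assumes "N > 0"
  shows "(\<lambda>a b x y. empirical N (F a) x * empirical N (G a b x) y) \<in> LOC N (R_SIG_box :: ('a,'b,'a,'a) strat)"
proof -
  \<comment> \<open>Bob learns Alice's input from the box; the shared randomness encodes two independent uniform
    indices below \<open>N\<close>, the first sampling Alice's output (which Bob recomputes), the second Bob's\<close>
  define R where "R = prod_encode ` ({..<N} \<times> {..<N})"
  define fO where "fO a (xs :: 'a list) r = F a (fst (prod_decode r))" for a xs r
  define gO where "gO b (ys :: 'a list) r = G (hd ys) b (F (hd ys) (fst (prod_decode r))) (snd (prod_decode r))"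
    for b ys r
  have R_nonempty: "finite R" "R \<noteq> {}"
    using \<open>N > 0\<close> unfolding R_def by auto
  have card_R: "card R = N * N"
    unfolding R_def by (simp add: card_image inj_on_def)
  have "realize N (R_SIG_box :: ('a,'b,'a,'a) strat) R (\<lambda>j a h r. a) fO (\<lambda>j b h r. b) gO a b x y
      = empirical N (F a) x * empirical N (G a b x) y" for a b x y
  proof -
    have "(\<Sum>r\<in>R. if fO a (replicate N a) r = x \<and> gO b (replicate N a) r = y then 1 else 0)
        = (\<Sum>(i, j)\<in>{..<N} \<times> {..<N}. if F a i = x \<and> G a b (F a i) j = y then 1 else (0::real))"
      using \<open>N > 0\<close> unfolding R_def fO_def gO_def
      by (subst sum.reindex) (auto simp: inj_on_def case_prod_beta)
    also have "\<dots> = (\<Sum>i<N. \<Sum>j<N. (if F a i = x then 1 else 0) * (if G a b x j = y then 1 else 0))"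
      unfolding sum.cartesian_product[symmetric] by (intro sum.cong refl) auto
    also have "\<dots> = (\<Sum>i<N. if F a i = x then 1 else 0) * (\<Sum>j<N. if G a b x j = y then 1 else 0)"
      by (simp add: sum_product)
    finally show ?thesis
      unfolding realize_R_SIG_box_forwarding empirical_eq_sum card_R by simp
  qed
  then have "realize N (R_SIG_box :: ('a,'b,'a,'a) strat) R (\<lambda>j a h r. a) fO (\<lambda>j b h r. b) gO
      = (\<lambda>a b x y. empirical N (F a) x * empirical N (G a b x) y)"
    by (intro ext)
  moreover have "realize N (R_SIG_box :: ('a,'b,'a,'a) strat) R (\<lambda>j a h r. a) fO (\<lambda>j b h r. b) gO
      \<in> LOC N (R_SIG_box :: ('a,'b,'a,'a) strat)"
    using R_nonempty unfolding LOC_def by blast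
  ultimately show ?thesis
    by simp
qed

lemma no_signal_to_alice_factorization:
  fixes P :: "('a::finite,'b::finite,'x::finite,'y::finite) strat"
  assumes "is_strategy P" and "no_signal_to_alice P"
  obtains PA Q where "\<And>a x. 0 \<le> PA a x" and "\<And>a. (\<Sum>x\<in>UNIV. PA a x) = 1"
    and "\<And>i y. 0 \<le> Q i y" and "\<And>i. (\<Sum>y\<in>UNIV. Q i y) = 1"
    and "\<And>a b x y. P a b x y = PA a x * Q (a, b, x) y"
proof -
  have P_nonneg: "0 \<le> P a b x y" for a b x y
    using \<open>is_strategy P\<close> unfolding is_strategy_def by simp
  define PA where "PA a x = (\<Sum>y\<in>UNIV. P a undefined x y)" for a x
  have PA_eq: "(\<Sum>y\<in>UNIV. P a b x y) = PA a x" for a b x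
    using \<open>no_signal_to_alice P\<close> unfolding no_signal_to_alice_def PA_def by blast
  have PA_nonneg: "0 \<le> PA a x" for a x
    unfolding PA_def by (simp add: P_nonneg sum_nonneg)
  have PA_sum: "(\<Sum>x\<in>UNIV. PA a x) = 1" for a
    using \<open>is_strategy P\<close> unfolding is_strategy_def PA_def by simp
  have "\<exists>Q. (\<forall>i y. 0 \<le> Q i y) \<and> (\<forall>i. (\<Sum>y\<in>UNIV. Q i y) = 1)
      \<and> (\<forall>i y. (\<lambda>(a, b, x). P a b x) i y = (\<Sum>y'\<in>UNIV. (\<lambda>(a, b, x). P a b x) i y') * Q i y)"
    by (rule exists_conditional_distribution) (simp add: P_nonneg split: prod.splits)
  then obtain Q where "\<forall>i y. 0 \<le> Q i y" and "\<forall>i. (\<Sum>y\<in>UNIV. Q i y) = 1"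
    and P_factor: "\<forall>i y. (\<lambda>(a, b, x). P a b x) i y = (\<Sum>y'\<in>UNIV. (\<lambda>(a, b, x). P a b x) i y') * Q i y"
    by blast
  moreover have "P a b x y = PA a x * Q (a, b, x) y" for a b x y
    using P_factor[rule_format, of "(a, b, x)" y] PA_eq by simp
  ultimately show ?thesis
    using that PA_nonneg PA_sum by blast
qed

lemma no_signal_to_alice_approximable_by_R_SIG_box:
  fixes P :: "('a::finite,'b::finite,'x::finite,'y::finite) strat"
  assumes "is_strategy P" and "no_signal_to_alice P" and "N > 0"
  shows "\<exists>V\<in>LOC N (R_SIG_box :: ('a,'b,'a,'a) strat).
           strat_dist P V \<le> 2 * real (CARD('a) * CARD('b) * CARD('x) * (1 + CARD('y))) / real N"
proof -
  obtain PA Q where PA_nonneg: "\<And>a x. 0 \<le> PA a x" and PA_sum: "\<And>a. (\<Sum>x\<in>UNIV. PA a x) = 1"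
    and Q_nonneg: "\<And>i y. 0 \<le> Q i y" and Q_sum: "\<And>i. (\<Sum>y\<in>UNIV. Q i y) = 1"
    and P_eq: "\<And>a b x y. P a b x y = PA a x * Q (a, b, x) y"
    using no_signal_to_alice_factorization[OF \<open>is_strategy P\<close> \<open>no_signal_to_alice P\<close>] by blast
  have "\<forall>a. \<exists>f. (\<Sum>x\<in>UNIV. \<bar>PA a x - empirical N f x\<bar>) \<le> 2 * real CARD('x) / real N"
    using exists_empirical_approx PA_nonneg PA_sum \<open>N > 0\<close> by blast
  then obtain F where F: "\<forall>a. (\<Sum>x\<in>UNIV. \<bar>PA a x - empirical N (F a) x\<bar>) \<le> 2 * real CARD('x) / real N"
    by (rule choice[THEN exE])
  have "\<forall>i. \<exists>g. (\<Sum>y\<in>UNIV. \<bar>Q i y - empirical N g y\<bar>) \<le> 2 * real CARD('y) / real N"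
    using exists_empirical_approx Q_nonneg Q_sum \<open>N > 0\<close> by blast
  then obtain G where G: "\<forall>i. (\<Sum>y\<in>UNIV. \<bar>Q i y - empirical N (G i) y\<bar>) \<le> 2 * real CARD('y) / real N"
    by (rule choice[THEN exE])
  define V where "V a b x y = empirical N (F a) x * empirical N (G (a, b, x)) y" for a b x y
  have V_LOC: "V \<in> LOC N (R_SIG_box :: ('a,'b,'a,'a) strat)"
    using empirical_product_in_LOC_R_SIG_box[OF \<open>N > 0\<close>, of F "\<lambda>a b x. G (a, b, x)"]
    unfolding V_def .
  have V_close: "(\<Sum>x\<in>UNIV. \<Sum>y\<in>UNIV. \<bar>P a b x y - V a b x y\<bar>)
      \<le> 2 * real CARD('x) / real N + real CARD('x) * (2 * real CARD('y) / real N)" for a b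
  proof -
    have "(\<Sum>x\<in>UNIV. \<Sum>y\<in>UNIV. \<bar>P a b x y - V a b x y\<bar>)
        \<le> (\<Sum>x\<in>UNIV. \<bar>PA a x - empirical N (F a) x\<bar>) + real CARD('x) * (2 * real CARD('y) / real N)"
      unfolding P_eq V_def
      by (rule sum_abs_diff_mult_le) (auto simp: Q_nonneg Q_sum empirical_nonneg empirical_le_1 G)
    then show ?thesis
      using F[rule_format, of a] by linarith
  qed
  have "strat_dist P V \<le> (\<Sum>a\<in>(UNIV :: 'a set). \<Sum>b\<in>(UNIV :: 'b set).
      2 * real CARD('x) / real N + real CARD('x) * (2 * real CARD('y) / real N))"
    unfolding strat_dist_def using V_close by (intro sum_mono)
  also have "\<dots> = 2 * real (CARD('a) * CARD('b) * CARD('x) * (1 + CARD('y))) / real N"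
    by (simp add: algebra_simps add_divide_distrib)
  finally show ?thesis
    using V_LOC by blast
qed

lemma R_SIG_class_iff:
  fixes P :: "('a::finite,'b::finite,'x::finite,'y::finite) strat"
  shows "P \<in> R_SIG_class \<longleftrightarrow> is_strategy P \<and> no_signal_to_alice P"
proof -
  have "no_signal_to_alice P" if "le_LOC P (R_SIG_box :: ('a,'b,'a,'a) strat)"
    using that
  proof (rule no_signal_to_alice_if_le_LOC)
    fix n and V :: "('a,'b,'x,'y) strat"
    assume "V \<in> LOC n (R_SIG_box :: ('a,'b,'a,'a) strat)"
    then obtain R fA fO gB gO where "V = realize n (R_SIG_box :: ('a,'b,'a,'a) strat) R fA fO gB gO"
      unfolding LOC_def by blast
    then show "no_signal_to_alice V"
      by (simp add: no_signal_to_alice_realize R_SIG_box_def)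
  qed
  moreover have "le_LOC P (R_SIG_box :: ('a,'b,'a,'a) strat)" if "is_strategy P" "no_signal_to_alice P"
    using no_signal_to_alice_approximable_by_R_SIG_box[OF that] by (rule le_LOC_if_approximable)
  ultimately show ?thesis
    unfolding R_SIG_class_def by blast
qed

definition swap_parties :: "('a,'b,'x,'y) strat \<Rightarrow> ('b,'a,'y,'x) strat" where
  "swap_parties P = (\<lambda>b a y x. P a b x y)"

lemma realize_swap_parties:
  "realize n (swap_parties U) R fA fO gB gO = swap_parties (realize n U R gB gO fA fO)"
proof (intro ext)
  fix a b x y
  have "(\<Sum>xs\<in>{xs. length xs = n}. \<Sum>ys\<in>{ys. length ys = n}.
          if fO a xs r = x \<and> gO b ys r = y
          then \<Prod>j<n. U (gB j b (take j ys) r) (fA j a (take j xs) r) (ys ! j) (xs ! j) else 0)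
      = (\<Sum>ys\<in>{ys. length ys = n}. \<Sum>xs\<in>{xs. length xs = n}.
          if gO b ys r = y \<and> fO a xs r = x
          then \<Prod>j<n. U (gB j b (take j ys) r) (fA j a (take j xs) r) (ys ! j) (xs ! j) else 0)" for r
    by (subst sum.swap) (simp add: conj_commute)
  then show "realize n (swap_parties U) R fA fO gB gO a b x y = swap_parties (realize n U R gB gO fA fO) a b x y"
    unfolding realize_def swap_parties_def by simp
qed

lemma LOC_swap_parties: "LOC n (swap_parties U) = swap_parties ` LOC n U"
  unfolding LOC_def realize_swap_parties by blast

lemma strat_dist_swap_parties: "strat_dist (swap_parties U) (swap_parties V) = strat_dist U V"
proof -
  have "strat_dist (swap_parties U) (swap_parties V)
      = (\<Sum>b\<in>UNIV. \<Sum>a\<in>UNIV. \<Sum>y\<in>UNIV. \<Sum>x\<in>UNIV. \<bar>U a b x y - V a b x y\<bar>)"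
    unfolding strat_dist_def swap_parties_def ..
  also have "\<dots> = (\<Sum>a\<in>UNIV. \<Sum>b\<in>UNIV. \<Sum>x\<in>UNIV. \<Sum>y\<in>UNIV. \<bar>U a b x y - V a b x y\<bar>)"
    by (subst sum.swap) (intro sum.cong refl sum.swap)
  finally show ?thesis
    unfolding strat_dist_def .
qed

lemma le_LOC_swap_parties: "le_LOC (swap_parties U') (swap_parties U) \<longleftrightarrow> le_LOC U' U"
  unfolding le_LOC_def strat_setdist_def LOC_swap_parties
  by (simp add: image_comp comp_def strat_dist_swap_parties)

lemma is_strategy_swap_parties: "is_strategy (swap_parties P) \<longleftrightarrow> is_strategy P"
proof -
  have "(\<Sum>y\<in>UNIV. \<Sum>x\<in>UNIV. P a b x y) = (\<Sum>x\<in>UNIV. \<Sum>y\<in>UNIV. P a b x y)" for a b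
    by (rule sum.swap)
  then show ?thesis
    unfolding is_strategy_def swap_parties_def by auto
qed

lemma swap_parties_L_SIG_box: "swap_parties (L_SIG_box :: ('a,'b,'b,'b) strat) = R_SIG_box"
  unfolding swap_parties_def L_SIG_box_def R_SIG_box_def by (intro ext) auto

lemma L_SIG_class_iff:
  "P \<in> L_SIG_class \<longleftrightarrow> is_strategy P \<and> no_signal_to_alice (swap_parties P)"
proof -
  have "P \<in> L_SIG_class \<longleftrightarrow> swap_parties P \<in> R_SIG_class"
    unfolding L_SIG_class_def R_SIG_class_def
    by (simp add: is_strategy_swap_parties le_LOC_swap_parties flip: swap_parties_L_SIG_box)
  then show ?thesis
    by (simp add: R_SIG_class_iff is_strategy_swap_parties)
qed

theorem mainTheorem5:
  shows "(R_SIG_class \<inter> L_SIG_class :: ('a::finite,'b::finite,'x::finite,'y::finite) strat set)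
         = no_signalling"
  unfolding no_signalling_def
  by (auto simp: R_SIG_class_iff L_SIG_class_iff no_signal_to_alice_def swap_parties_def)

end
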